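(* Let $h:(0,\infty)\to(0,2]$ be smooth with $h(t)=1$ for $t\le\frac12$ and $h(t)=\frac1t$ for $t\ge1$, and let $\widehat V(q,p)=\sum_{i=1}^n(p_i+h(|q|)q_i)\partial_{p_i}$ on $T^*\mathbb{R}^n$ (with $\widehat V(0,p)=\sum_i p_i\partial_{p_i}$). Then $\widehat V$ is a Liouville vector field for $\omega_0$, and the vector field on $W\setminus Y$ given by $\pi_*\widehat V$ on each copy $\pi(\mathbb{R}^{2n}\times\{\pm1\})$ extends uniquely to a $b^3$-vector field $V$ on $(W,Y)$ which is a Liouville $b^3$-vector field for $\omega_b$, i.e. $\mathcal{L}_V\omega_b=\omega_b$.
   Context: Fix $n\ge1$. Identify $\mathbb{R}^{2n}=T^*\mathbb{R}^n$ with coordinates $(q,p)$ and $\omega_0=\sum dq_i\wedge dp_i$. Realize $T^*S^{n-1}=\{(\psi,\zeta)\in\mathbb{R}^n\times\mathbb{R}^n:|\psi|=1,\ \psi\cdot\zeta=0\}$ with symplectic form the restriction of $\sum d\psi_i\wedge d\zeta_i$. Let $\widetilde W=\mathbb{R}^2\times T^*S^{n-1}$ with coordinates $(z,P_r,\psi,\zeta)$, $\widetilde Y=\{z=0\}$. Define $f:\widetilde W\setminus\widetilde Y\to\mathbb{R}^{2n}\times\{-1,1\}$ by $f(z,P_r,\psi,\zeta)=\big((2z^{-2}\psi,\ P_r\psi+\tfrac{z^2}{2}\zeta),\operatorname{sgn}z\big)$; it is a diffeomorphism onto $T^*(\mathbb{R}^n\setminus\{0\})\times\{-1,1\}$. Let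 $W:=\big((\mathbb{R}^{2n}\times\{-1,1\})\sqcup\widetilde W\big)/\sim$ where $w\sim f(w)$ for $w\in\widetilde W\setminus\widetilde Y$, with the quotient topology; $\pi$ denotes the projection and $Y:=\pi(\widetilde Y)$. The $b^3$-structure near $Y$ is determined by the defining function $z$ ($b^3$-vector fields locally generated by $z^3\partial_z$ and derivatives in the remaining coordinates). $\omega_b$ is the unique $b^3$-symplectic form on $(W,Y)$ with $\pi^*\omega_b=\omega_0$ on $\mathbb{R}^{2n}\times\{-1,1\}$ and $\pi^*\omega_b=-\frac4{z^3}dz\wedge dP_r+\sum d\psi_i\wedge d\zeta_i$ on $\widetilde W$. *)

theory Defs
  imports "HOL-Analysis.Analysis"
begin

fun iter_dderiv :: "'a::real_normed_vector list \<Rightarrow> ('a \<Rightarrow> 'b::real_normed_vector) \<Rightarrow> 'a \<Rightarrow> 'b" where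
  "iter_dderiv [] f = f"
| "iter_dderiv (v # vs) f = (\<lambda>x. frechet_derivative (iter_dderiv vs f) (at x) v)"

definition smooth_on :: "'a::real_normed_vector set \<Rightarrow> ('a \<Rightarrow> 'b::real_normed_vector) \<Rightarrow> bool" where
  "smooth_on S f \<longleftrightarrow> open S \<and> (\<forall>vs. iter_dderiv vs f differentiable_on S)"

definition smooth_on_set :: "'a::real_normed_vector set \<Rightarrow> ('a \<Rightarrow> 'b::real_normed_vector) \<Rightarrow> bool" where
  "smooth_on_set N f \<longleftrightarrow>
     (\<forall>x\<in>N. \<exists>U g. x \<in> U \<and> smooth_on U g \<and> (\<forall>y\<in>U \<inter> N. g y = f y))"

definition tangent_vectors :: "'a::real_normed_vector set \<Rightarrow> 'a \<Rightarrow> 'a set" where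
  "tangent_vectors N x = {v. \<exists>\<gamma> e. 0 < e \<and> \<gamma> 0 = x \<and> (\<forall>t. \<bar>t\<bar> < e \<longrightarrow> \<gamma> t \<in> N)
                              \<and> (\<gamma> has_vector_derivative v) (at 0)}"

text \<open>A 2-form field is given as a map point => (u => w => value).
  Coordinate formula: (L_X Om)_x(u,w) = (D Om_x [X x])(u,w) + Om_x(DX u, w) + Om_x(u, DX w).\<close>
definition lie_deriv2 ::
  "('a::real_normed_vector \<Rightarrow> 'a) \<Rightarrow> ('a \<Rightarrow> 'a \<Rightarrow> 'a \<Rightarrow> real) \<Rightarrow> 'a \<Rightarrow> 'a \<Rightarrow> 'a \<Rightarrow> real" where
  "lie_deriv2 X Om x u w =
     frechet_derivative (\<lambda>y. Om y u w) (at x) (X x)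
     + Om x (frechet_derivative X (at x) u) w
     + Om x u (frechet_derivative X (at x) w)"

definition liouville_on :: "'a::real_normed_vector set \<Rightarrow> ('a \<Rightarrow> 'a \<Rightarrow> 'a \<Rightarrow> real) \<Rightarrow> ('a \<Rightarrow> 'a) \<Rightarrow> bool" where
  "liouville_on U Om X \<longleftrightarrow> smooth_on U X \<and> (\<forall>x\<in>U. \<forall>u w. lie_deriv2 X Om x u w = Om x u w)"

definition liouville_on_subset :: "'a::real_normed_vector set \<Rightarrow> ('a \<Rightarrow> 'a \<Rightarrow> 'a \<Rightarrow> real) \<Rightarrow> ('a \<Rightarrow> 'a) \<Rightarrow> bool" where
  "liouville_on_subset N Om X \<longleftrightarrow>
     smooth_on_set N X \<and> (\<forall>x\<in>N. X x \<in> tangent_vectors N x) \<and>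
     (\<forall>x\<in>N. \<exists>U g. x \<in> U \<and> smooth_on U g \<and> (\<forall>y\<in>U \<inter> N. g y = X y) \<and>
        (\<forall>u\<in>tangent_vectors N x. \<forall>w\<in>tangent_vectors N x. lie_deriv2 g Om x u w = Om x u w))"

text \<open>T^*R^n = R^n x R^n with coordinates (q,p); omega_0 = sum dq_i /\ dp_i.\<close>
definition omega0 :: "(real^'n) \<times> (real^'n) \<Rightarrow> (real^'n) \<times> (real^'n) \<Rightarrow> (real^'n) \<times> (real^'n) \<Rightarrow> real" where
  "omega0 x u w = fst u \<bullet> snd w - fst w \<bullet> snd u"

definition Vhat :: "(real \<Rightarrow> real) \<Rightarrow> (real^'n) \<times> (real^'n) \<Rightarrow> (real^'n) \<times> (real^'n)" where
  "Vhat h = (\<lambda>(q, p). (0, p + h (norm q) *\<^sub>R q))"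

text \<open>Coordinates (z, P_r, psi, zeta) on Wtilde = R^2 x T^*S^(n-1).\<close>
type_synonym ('n) wt = "real \<times> real \<times> (real^('n::finite)) \<times> (real^'n)"

definition Wtilde :: "('n::finite) wt set" where
  "Wtilde = {(z, P, \<psi>, \<zeta>). norm \<psi> = 1 \<and> \<psi> \<bullet> \<zeta> = 0}"

definition Ytilde :: "('n::finite) wt set" where
  "Ytilde = {w \<in> Wtilde. fst w = 0}"

text \<open>The gluing map f (its first component; the second is sgn z).\<close>
definition fmap :: "('n::finite) wt \<Rightarrow> (real^'n) \<times> (real^'n)" where
  "fmap = (\<lambda>(z, P, \<psi>, \<zeta>). ((2 / z^2) *\<^sub>R \<psi>, P *\<^sub>R \<psi> + (z^2 / 2) *\<^sub>R \<zeta>))"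

text \<open>pi^* omega_b = -4/z^3 dz /\ dP_r + sum dpsi_i /\ dzeta_i  (for z \<noteq> 0).\<close>
definition omega_b :: "('n::finite) wt \<Rightarrow> ('n::finite) wt \<Rightarrow> ('n::finite) wt \<Rightarrow> real" where
  "omega_b = (\<lambda>(z, P, \<psi>, \<zeta>) (a1, b1, u1, w1) (a2, b2, u2, w2).
      - 4 / z^3 * (a1 * b2 - a2 * b1) + (u1 \<bullet> w2 - u2 \<bullet> w1))"

text \<open>b^3-vector field on (Wtilde, Ytilde) for the defining function z: a smooth vector field
  tangent to Wtilde whose dz-component is z^3 times a smooth function.\<close>
definition b3_vector_field :: "(('n::finite) wt \<Rightarrow> ('n::finite) wt) \<Rightarrow> bool" where
  "b3_vector_field V \<longleftrightarrow>
     smooth_on_set Wtilde V \<and> (\<forall>w\<in>Wtilde. V w \<in> tangent_vectors Wtilde w) \<and>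
     (\<exists>a :: ('n::finite) wt \<Rightarrow> real. smooth_on_set Wtilde a \<and> (\<forall>w\<in>Wtilde. fst (V w) = (fst w)^3 * a w))"

text \<open>V on Wtilde \ Ytilde is the pushforward of Vhat: f-related to Vhat.\<close>
definition f_related :: "(real \<Rightarrow> real) \<Rightarrow> (('n::finite) wt \<Rightarrow> ('n::finite) wt) \<Rightarrow> bool" where
  "f_related h V \<longleftrightarrow>
     (\<forall>w\<in>Wtilde - Ytilde. frechet_derivative fmap (at w) (V w) = Vhat h (fmap w))"

end

theory Submission
  imports Defs
begin

text \<open>The field \<open>V\<^sub>h\<^sub>a\<^sub>t\<close> has linearisation \<open>(a, b) \<mapsto> (0, b + L a)\<close>, where \<open>L\<close> is the derivative of
  \<open>q \<mapsto> h(|q|) q\<close>, a symmetric map; as \<open>\<omega>\<^sub>0\<close> is constant this gives \<open>L\<^sub>V \<omega>\<^sub>0 = \<omega>\<^sub>0\<close>.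
  In the coordinates of \<open>W\<^sub>t\<^sub>i\<^sub>l\<^sub>d\<^sub>e\<close>, where \<open>|q| = 2/z\<^sup>2\<close>, the field becomes
  \<open>(P\<^sub>r + |q| h(|q|)) \<partial>\<^sub>P\<^sub>r + \<zeta> \<partial>\<^sub>\<zeta>\<close>. Since \<open>h(t) = 1/t\<close> for \<open>t \<ge> 1\<close>, the coefficient is \<open>1\<close>
  near \<open>z = 0\<close>, so the field extends smoothly across \<open>Y\<close> with no \<open>\<partial>\<^sub>z\<close>-component; it is therefore a
  \<open>b\<^sup>3\<close>-field, and it preserves \<open>\<omega>\<^sub>b\<close> because it does not move \<open>z\<close>. Off \<open>Y\<close> the tangent map of \<open>f\<close>
  is injective, which pins the extension down; on \<open>Y\<close> uniqueness follows by continuity.\<close>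

section \<open>Smooth maps\<close>

lemma frechet_derivative_cong_open:
  assumes "open S" "x \<in> S" "\<And>y. y \<in> S \<Longrightarrow> f y = g y"
  shows "frechet_derivative f (at x) = frechet_derivative g (at x)"
proof -
  have "(f has_derivative D) (at x) \<longleftrightarrow> (g has_derivative D) (at x)" for D
    using assms has_derivative_transform_within_open[of f D x UNIV S g]
      has_derivative_transform_within_open[of g D x UNIV S f] by auto
  then show ?thesis unfolding frechet_derivative_def by simp
qed

lemma iter_dderiv_cong_open:
  assumes "open S" "\<And>y. y \<in> S \<Longrightarrow> f y = g y" "y \<in> S"
  shows "iter_dderiv vs f y = iter_dderiv vs g y"
  using assms(3)
proof (induction vs arbitrary: y)
  case Nil
  then show ?case using assms(2) by simp
next
  case (Cons v vs)
  then show ?case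
    using frechet_derivative_cong_open[OF assms(1) Cons.prems, of "iter_dderiv vs f" "iter_dderiv vs g"]
    by simp
qed

lemma differentiable_on_cong_open:
  assumes "open S" "f differentiable_on S" "\<And>y. y \<in> S \<Longrightarrow> f y = g y"
  shows "g differentiable_on S"
  using assms unfolding differentiable_on_eq_differentiable_at[OF assms(1)]
  by (metis differentiable_def has_derivative_transform_within_open)

lemma smooth_on_cong:
  assumes "smooth_on S f" "\<And>y. y \<in> S \<Longrightarrow> f y = g y"
  shows "smooth_on S g"
  using assms iter_dderiv_cong_open[of S f g] differentiable_on_cong_open
  unfolding smooth_on_def by metis

lemma smooth_on_open: "smooth_on S f \<Longrightarrow> open S"
  unfolding smooth_on_def by simp

lemma smooth_on_differentiable_at: "smooth_on S f \<Longrightarrow> x \<in> S \<Longrightarrow> f differentiable at x"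
  unfolding smooth_on_def by (metis differentiable_on_eq_differentiable_at iter_dderiv.simps(1))

lemma smooth_on_has_derivative:
  "smooth_on S f \<Longrightarrow> x \<in> S \<Longrightarrow> (f has_derivative frechet_derivative f (at x)) (at x)"
  using frechet_derivative_works smooth_on_differentiable_at by blast

lemma iter_dderiv_snoc:
  "iter_dderiv vs (\<lambda>x. frechet_derivative f (at x) v) = iter_dderiv (vs @ [v]) f"
  by (induction vs) auto

lemma smooth_on_frechet_derivative:
  "smooth_on S f \<Longrightarrow> smooth_on S (\<lambda>x. frechet_derivative f (at x) v)"
  unfolding smooth_on_def iter_dderiv_snoc by simp

lemma smooth_on_local:
  assumes "open S" "\<And>x. x \<in> S \<Longrightarrow> \<exists>U. x \<in> U \<and> smooth_on U f"
  shows "smooth_on S f"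
  unfolding smooth_on_def differentiable_on_eq_differentiable_at[OF assms(1)]
  using assms unfolding smooth_on_def by (metis differentiable_on_eq_differentiable_at)

lemma smooth_on_imp_smooth_on_set: "smooth_on UNIV f \<Longrightarrow> smooth_on_set N f"
  unfolding smooth_on_set_def by blast

lemma smooth_on_set_continuous_on:
  assumes "smooth_on_set N f"
  shows "continuous_on N f"
  unfolding continuous_on_eq_continuous_within
proof
  fix x assume "x \<in> N"
  then obtain U g where U: "x \<in> U" "smooth_on U g" "\<forall>y\<in>U \<inter> N. g y = f y"
    using assms unfolding smooth_on_set_def by blast
  have "isCont g x"
    using differentiable_imp_continuous_within[OF smooth_on_differentiable_at[OF U(2,1)]] .
  then have "continuous (at x within N) g"
    by (rule continuous_at_imp_continuous_at_within)
  moreover have "openin (top_of_set N) (N \<inter> U)"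
    using smooth_on_open[OF U(2)] by (rule openin_open_Int)
  ultimately show "continuous (at x within N) f"
    by (rule continuous_transform_within_openin) (use U \<open>x \<in> N\<close> in auto)
qed

lemma smooth_on_coinduct:
  assumes S: "open S" and "P f"
    and step: "\<And>g. P g \<Longrightarrow> \<exists>G. (\<forall>x\<in>S. (g has_derivative G x) (at x)) \<and> (\<forall>v. P (\<lambda>x. G x v))"
  shows "smooth_on S f"
proof -
  have iter: "\<exists>g. P g \<and> (\<forall>x\<in>S. g x = iter_dderiv vs f x)" for vs
  proof (induction vs)
    case Nil
    show ?case using \<open>P f\<close> by (intro exI[of _ f]) simp
  next
    case (Cons v vs)
    then obtain g where g: "P g" "\<forall>x\<in>S. g x = iter_dderiv vs f x" by blast
    obtain G where G: "\<forall>x\<in>S. (g has_derivative G x) (at x)" "P (\<lambda>x. G x v)"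
      using step[OF g(1)] by blast
    have "G x v = iter_dderiv (v # vs) f x" if "x \<in> S" for x
    proof -
      have "G x = frechet_derivative g (at x)"
        using G(1) that by (simp add: frechet_derivative_at)
      also have "\<dots> = frechet_derivative (iter_dderiv vs f) (at x)"
        using frechet_derivative_cong_open[OF S that] g(2) by blast
      finally show ?thesis by simp
    qed
    with G(2) show ?case by (intro exI[of _ "\<lambda>x. G x v"]) simp
  qed
  have "iter_dderiv vs f differentiable_on S" for vs
  proof -
    obtain g where g: "P g" "\<forall>x\<in>S. g x = iter_dderiv vs f x" using iter by blast
    obtain G where "\<forall>x\<in>S. (g has_derivative G x) (at x)" using step[OF g(1)] by blast
    then have "g differentiable_on S"
      by (auto simp: differentiable_on_eq_differentiable_at[OF S] differentiable_def)
    then show ?thesis using differentiable_on_cong_open[OF S] g(2) by blast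
  qed
  then show ?thesis unfolding smooth_on_def using S by blast
qed

lemma smooth_on_affine:
  assumes S: "open S" and L: "bounded_linear L"
  shows "smooth_on S (\<lambda>x. L x + c)"
proof (rule smooth_on_coinduct[where P = "\<lambda>g. \<exists>L c. bounded_linear L \<and> (\<forall>x\<in>S. g x = L x + c)"])
  fix g assume "\<exists>L c. bounded_linear L \<and> (\<forall>x\<in>S. g x = L x + c)"
  then obtain L c where L: "bounded_linear L" "\<forall>x\<in>S. g x = L x + c" by blast
  have "(g has_derivative L) (at x)" if "x \<in> S" for x
    using has_derivative_transform_within_open[of "\<lambda>x. L x + c" L x UNIV S g] L S that
    by (auto intro!: has_derivative_add_const bounded_linear_imp_has_derivative)
  moreover have "\<exists>L' c'. bounded_linear L' \<and> (\<forall>x\<in>S. L v = L' x + c')" for v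
    by (intro exI[of _ "\<lambda>_. 0"] exI[of _ "L v"]) (simp add: bounded_linear_zero)
  ultimately show "\<exists>G. (\<forall>x\<in>S. (g has_derivative G x) (at x))
      \<and> (\<forall>v. \<exists>L c. bounded_linear L \<and> (\<forall>x\<in>S. G x v = L x + c))"
    by (intro exI[of _ "\<lambda>_. L"]) simp
qed (use assms in \<open>auto intro: exI[of _ L] exI[of _ c]\<close>)

lemma smooth_on_const: "open S \<Longrightarrow> smooth_on S (\<lambda>x. c)"
  using smooth_on_affine[of S "\<lambda>x. 0" c] bounded_linear_zero by simp

lemma smooth_on_bounded_linear: "open S \<Longrightarrow> bounded_linear L \<Longrightarrow> smooth_on S L"
  using smooth_on_affine[of S L 0] by simp

lemma smooth_on_compose_bounded_linear:
  fixes f :: "'a::real_normed_vector \<Rightarrow> 'b::real_normed_vector" and L :: "'b \<Rightarrow> 'c::real_normed_vector"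
  assumes L: "bounded_linear L" and f: "smooth_on S f"
  shows "smooth_on S (\<lambda>x. L (f x))"
proof (rule smooth_on_coinduct[where P = "\<lambda>g. \<exists>f::'a \<Rightarrow> 'b. smooth_on S f \<and> (\<forall>x\<in>S. g x = L (f x))"])
  show S: "open S" using f smooth_on_open by blast
  show "\<exists>f'::'a \<Rightarrow> 'b. smooth_on S f' \<and> (\<forall>x\<in>S. L (f x) = L (f' x))"
    using f by (intro exI[of _ f]) simp
  fix g :: "'a \<Rightarrow> 'c"
  assume "\<exists>f. smooth_on S f \<and> (\<forall>x\<in>S. g x = L (f x))"
  then obtain f where f: "smooth_on S f" "\<forall>x\<in>S. g x = L (f x)" by blast
  define G where "G = (\<lambda>x v. L (frechet_derivative f (at x) v))"
  have deriv: "(g has_derivative G x) (at x)" if "x \<in> S" for x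
    using has_derivative_transform_within_open[of "\<lambda>x. L (f x)" _ x UNIV S g] f S that
    unfolding G_def
    by (auto intro!: bounded_linear.has_derivative[OF L] smooth_on_has_derivative[OF f(1) that])
  have closed: "\<exists>f'. smooth_on S f' \<and> (\<forall>x\<in>S. G x v = L (f' x))" for v
    by (intro exI[of _ "\<lambda>x. frechet_derivative f (at x) v"])
      (simp add: G_def smooth_on_frechet_derivative f)
  show "\<exists>G. (\<forall>x\<in>S. (g has_derivative G x) (at x))
      \<and> (\<forall>v. \<exists>f. smooth_on S f \<and> (\<forall>x\<in>S. G x v = L (f x)))"
    by (intro exI[of _ G] conjI ballI allI deriv closed)
qed

lemma smooth_on_Pair:
  fixes f :: "'a::real_normed_vector \<Rightarrow> 'b::real_normed_vector" and g :: "'a \<Rightarrow> 'c::real_normed_vector"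
  assumes f: "smooth_on S f" and g: "smooth_on S g"
  shows "smooth_on S (\<lambda>x. (f x, g x))"
proof (rule smooth_on_coinduct[where P = "\<lambda>k. \<exists>(f::'a \<Rightarrow> 'b) (g::'a \<Rightarrow> 'c). smooth_on S f \<and> smooth_on S g \<and> (\<forall>x\<in>S. k x = (f x, g x))"])
  show S: "open S" using f smooth_on_open by blast
  show "\<exists>(f'::'a \<Rightarrow> 'b) (g'::'a \<Rightarrow> 'c). smooth_on S f' \<and> smooth_on S g' \<and> (\<forall>x\<in>S. (f x, g x) = (f' x, g' x))"
    using f g by (intro exI[of _ f] exI[of _ g]) simp
  fix k :: "'a \<Rightarrow> 'b \<times> 'c"
  assume "\<exists>f g. smooth_on S f \<and> smooth_on S g \<and> (\<forall>x\<in>S. k x = (f x, g x))"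
  then obtain f g where fg: "smooth_on S f" "smooth_on S g" "\<forall>x\<in>S. k x = (f x, g x)" by blast
  define G where "G = (\<lambda>x v. (frechet_derivative f (at x) v, frechet_derivative g (at x) v))"
  have deriv: "(k has_derivative G x) (at x)" if "x \<in> S" for x
    using has_derivative_transform_within_open[of "\<lambda>x. (f x, g x)" _ x UNIV S k] fg S that
    unfolding G_def
    by (auto intro!: has_derivative_Pair smooth_on_has_derivative[OF fg(1) that] smooth_on_has_derivative[OF fg(2) that])
  have closed: "\<exists>f' g'. smooth_on S f' \<and> smooth_on S g' \<and> (\<forall>x\<in>S. G x v = (f' x, g' x))" for v
    by (intro exI[of _ "\<lambda>x. frechet_derivative f (at x) v"] exI[of _ "\<lambda>x. frechet_derivative g (at x) v"])
      (simp add: G_def smooth_on_frechet_derivative fg)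
  show "\<exists>G. (\<forall>x\<in>S. (k has_derivative G x) (at x))
      \<and> (\<forall>v. \<exists>f g. smooth_on S f \<and> smooth_on S g \<and> (\<forall>x\<in>S. G x v = (f x, g x)))"
    by (intro exI[of _ G] conjI ballI allI deriv closed)
qed

lemma smooth_on_add:
  fixes f g :: "'a::real_normed_vector \<Rightarrow> 'b::real_normed_vector"
  assumes "smooth_on S f" "smooth_on S g"
  shows "smooth_on S (\<lambda>x. f x + g x)"
proof -
  have "bounded_linear (\<lambda>y::'b \<times> 'b. fst y + snd y)"
    by (intro bounded_linear_add bounded_linear_fst bounded_linear_snd)
  from smooth_on_compose_bounded_linear[OF this smooth_on_Pair[OF assms]] show ?thesis by simp
qed

lemma has_derivative_sum_list_bilinear:
  fixes prod :: "'b::real_normed_vector \<Rightarrow> 'c::real_normed_vector \<Rightarrow> 'd::real_normed_vector"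
    and xs :: "(('a::real_normed_vector \<Rightarrow> 'b) \<times> ('a \<Rightarrow> 'c)) list"
  assumes bb: "bounded_bilinear prod"
    and diff: "\<forall>p\<in>set xs. fst p differentiable at x \<and> snd p differentiable at x"
  shows "((\<lambda>y. \<Sum>p\<leftarrow>xs. prod (fst p y) (snd p y)) has_derivative
      (\<lambda>v. \<Sum>p\<leftarrow>xs. prod (fst p x) (frechet_derivative (snd p) (at x) v)
                   + prod (frechet_derivative (fst p) (at x) v) (snd p x))) (at x)"
  using diff
proof (induction xs)
  case Nil
  then show ?case by simp
next
  case (Cons p xs)
  then have "((\<lambda>y. prod (fst p y) (snd p y)) has_derivative
      (\<lambda>v. prod (fst p x) (frechet_derivative (snd p) (at x) v)
           + prod (frechet_derivative (fst p) (at x) v) (snd p x))) (at x)"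
    by (auto intro!: bounded_bilinear.FDERIV[OF bb] frechet_derivative_works[THEN iffD1])
  with Cons show ?case by (auto intro!: has_derivative_add)
qed

text \<open>The derivative of a product is a sum of two products, so the coinduction runs over finite
  sums of products of smooth functions.\<close>

lemma smooth_on_bilinear:
  fixes prod :: "'b::real_normed_vector \<Rightarrow> 'c::real_normed_vector \<Rightarrow> 'd::real_normed_vector"
    and f :: "'a::real_normed_vector \<Rightarrow> 'b" and g :: "'a \<Rightarrow> 'c"
  assumes bb: "bounded_bilinear prod" and f: "smooth_on S f" and g: "smooth_on S g"
  shows "smooth_on S (\<lambda>x. prod (f x) (g x))"
proof (rule smooth_on_coinduct[where P = "\<lambda>k. \<exists>xs::(('a \<Rightarrow> 'b) \<times> ('a \<Rightarrow> 'c)) list.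
    (\<forall>p\<in>set xs. smooth_on S (fst p) \<and> smooth_on S (snd p))
    \<and> (\<forall>x\<in>S. k x = (\<Sum>p\<leftarrow>xs. prod (fst p x) (snd p x)))"])
  show S: "open S" using f smooth_on_open by blast
  show "\<exists>xs::(('a \<Rightarrow> 'b) \<times> ('a \<Rightarrow> 'c)) list. (\<forall>p\<in>set xs. smooth_on S (fst p) \<and> smooth_on S (snd p))
      \<and> (\<forall>x\<in>S. prod (f x) (g x) = (\<Sum>p\<leftarrow>xs. prod (fst p x) (snd p x)))"
    using f g by (intro exI[of _ "[(f, g)]"]) simp
  fix k :: "'a \<Rightarrow> 'd"
  assume "\<exists>xs::(('a \<Rightarrow> 'b) \<times> ('a \<Rightarrow> 'c)) list. (\<forall>p\<in>set xs. smooth_on S (fst p) \<and> smooth_on S (snd p))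
      \<and> (\<forall>x\<in>S. k x = (\<Sum>p\<leftarrow>xs. prod (fst p x) (snd p x)))"
  then obtain xs :: "(('a \<Rightarrow> 'b) \<times> ('a \<Rightarrow> 'c)) list"
    where xs: "\<forall>p\<in>set xs. smooth_on S (fst p) \<and> smooth_on S (snd p)"
      "\<forall>x\<in>S. k x = (\<Sum>p\<leftarrow>xs. prod (fst p x) (snd p x))" by blast
  define G where "G = (\<lambda>x v. \<Sum>p\<leftarrow>xs. prod (fst p x) (frechet_derivative (snd p) (at x) v)
                                 + prod (frechet_derivative (fst p) (at x) v) (snd p x))"
  have deriv: "(k has_derivative G x) (at x)" if "x \<in> S" for x
    unfolding G_def
    by (rule has_derivative_transform_within_open[OF has_derivative_sum_list_bilinear[OF bb] S that])
      (use xs that in \<open>auto intro: smooth_on_differentiable_at\<close>)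
  have closed: "\<exists>ys::(('a \<Rightarrow> 'b) \<times> ('a \<Rightarrow> 'c)) list. (\<forall>p\<in>set ys. smooth_on S (fst p) \<and> smooth_on S (snd p))
      \<and> (\<forall>x\<in>S. G x v = (\<Sum>p\<leftarrow>ys. prod (fst p x) (snd p x)))" for v
  proof (intro exI conjI)
    let ?ys = "map (\<lambda>p. (fst p, \<lambda>y. frechet_derivative (snd p) (at y) v)) xs
             @ map (\<lambda>p. (\<lambda>y. frechet_derivative (fst p) (at y) v, snd p)) xs"
    show "\<forall>p\<in>set ?ys. smooth_on S (fst p) \<and> smooth_on S (snd p)"
      using xs(1) by (fastforce intro!: smooth_on_frechet_derivative)
    show "\<forall>x\<in>S. G x v = (\<Sum>p\<leftarrow>?ys. prod (fst p x) (snd p x))"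
      by (simp add: G_def sum_list_addf o_def)
  qed
  show "\<exists>G. (\<forall>x\<in>S. (k has_derivative G x) (at x))
      \<and> (\<forall>v. \<exists>ys::(('a \<Rightarrow> 'b) \<times> ('a \<Rightarrow> 'c)) list. (\<forall>p\<in>set ys. smooth_on S (fst p) \<and> smooth_on S (snd p))
        \<and> (\<forall>x\<in>S. G x v = (\<Sum>p\<leftarrow>ys. prod (fst p x) (snd p x))))"
    by (intro exI[of _ G] conjI ballI allI deriv closed)
qed

lemma has_derivative_compose_real:
  fixes g :: "real \<Rightarrow> real" and f :: "'a::real_normed_vector \<Rightarrow> real"
  assumes f: "f differentiable at x" and g: "g differentiable at (f x)"
  shows "((\<lambda>y. g (f y)) has_derivative
      (\<lambda>v. frechet_derivative f (at x) v * frechet_derivative g (at (f x)) 1)) (at x)"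
proof -
  obtain D where D: "(g has_derivative (\<lambda>s. s * D)) (at (f x))"
    using g by (auto simp: real_differentiable_def has_field_derivative_def mult.commute)
  then have "frechet_derivative g (at (f x)) 1 = D"
    by (simp add: frechet_derivative_at[OF D, symmetric])
  with diff_chain_at[OF f[THEN frechet_derivative_works[THEN iffD1]] D] show ?thesis
    by (simp add: o_def)
qed

lemma smooth_on_compose_real:
  fixes g :: "real \<Rightarrow> real" and f :: "'a::real_normed_vector \<Rightarrow> real"
  assumes g: "smooth_on T g" and f: "smooth_on S f" and fT: "\<And>x. x \<in> S \<Longrightarrow> f x \<in> T"
  shows "smooth_on S (\<lambda>x. g (f x))"
proof (rule smooth_on_coinduct[where P = "\<lambda>k. \<exists>xs::((real \<Rightarrow> real) \<times> ('a \<Rightarrow> real)) list.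
    (\<forall>p\<in>set xs. smooth_on T (fst p) \<and> smooth_on S (snd p))
    \<and> (\<forall>x\<in>S. k x = (\<Sum>p\<leftarrow>xs. fst p (f x) * snd p x))"])
  show S: "open S" using f smooth_on_open by blast
  show "\<exists>xs::((real \<Rightarrow> real) \<times> ('a \<Rightarrow> real)) list. (\<forall>p\<in>set xs. smooth_on T (fst p) \<and> smooth_on S (snd p))
      \<and> (\<forall>x\<in>S. g (f x) = (\<Sum>p\<leftarrow>xs. fst p (f x) * snd p x))"
    using g smooth_on_const[OF S] by (intro exI[of _ "[(g, \<lambda>x. 1)]"]) simp
  fix k :: "'a \<Rightarrow> real"
  assume "\<exists>xs::((real \<Rightarrow> real) \<times> ('a \<Rightarrow> real)) list. (\<forall>p\<in>set xs. smooth_on T (fst p) \<and> smooth_on S (snd p))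
      \<and> (\<forall>x\<in>S. k x = (\<Sum>p\<leftarrow>xs. fst p (f x) * snd p x))"
  then obtain xs :: "((real \<Rightarrow> real) \<times> ('a \<Rightarrow> real)) list"
    where xs: "\<forall>p\<in>set xs. smooth_on T (fst p) \<and> smooth_on S (snd p)"
      "\<forall>x\<in>S. k x = (\<Sum>p\<leftarrow>xs. fst p (f x) * snd p x)" by blast
  define G where "G = (\<lambda>x v. \<Sum>p\<leftarrow>xs. fst p (f x) * frechet_derivative (snd p) (at x) v
      + frechet_derivative (fst p) (at (f x)) 1 * (frechet_derivative f (at x) v * snd p x))"
  have deriv: "(k has_derivative G x) (at x)" if x: "x \<in> S" for x
  proof -
    let ?ys = "map (\<lambda>p. (\<lambda>y. fst p (f y), snd p)) xs"
    have chain: "((\<lambda>y. fst p (f y)) has_derivative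
        (\<lambda>v. frechet_derivative f (at x) v * frechet_derivative (fst p) (at (f x)) 1)) (at x)"
      if "p \<in> set xs" for p
    proof -
      have "smooth_on T (fst p)" using xs(1) that by blast
      then show ?thesis
        by (intro has_derivative_compose_real smooth_on_differentiable_at[OF f x]
            smooth_on_differentiable_at[OF _ fT[OF x]])
    qed
    have "\<forall>q\<in>set ?ys. fst q differentiable at x \<and> snd q differentiable at x"
      using chain xs(1) x by (auto intro: differentiableI smooth_on_differentiable_at)
    from has_derivative_sum_list_bilinear[OF bounded_bilinear_mult this]
    have "((\<lambda>y. \<Sum>p\<leftarrow>xs. fst p (f y) * snd p y) has_derivative (\<lambda>v. \<Sum>p\<leftarrow>xs.
        fst p (f x) * frechet_derivative (snd p) (at x) v
        + frechet_derivative (\<lambda>y. fst p (f y)) (at x) v * snd p x)) (at x)"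
      by (simp add: o_def)
    also have "(\<lambda>v. \<Sum>p\<leftarrow>xs. fst p (f x) * frechet_derivative (snd p) (at x) v
        + frechet_derivative (\<lambda>y. fst p (f y)) (at x) v * snd p x) = G x"
      unfolding G_def
      by (intro ext arg_cong[where f = sum_list] map_cong refl)
        (simp add: frechet_derivative_at[OF chain, symmetric])
    finally show ?thesis
      by (rule has_derivative_transform_within_open[OF _ S x]) (use xs(2) in simp)
  qed
  have closed: "\<exists>ys::((real \<Rightarrow> real) \<times> ('a \<Rightarrow> real)) list. (\<forall>p\<in>set ys. smooth_on T (fst p) \<and> smooth_on S (snd p))
      \<and> (\<forall>x\<in>S. G x v = (\<Sum>p\<leftarrow>ys. fst p (f x) * snd p x))" for v
  proof (intro exI conjI)
    let ?ys = "map (\<lambda>p. (fst p, \<lambda>y. frechet_derivative (snd p) (at y) v)) xs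
        @ map (\<lambda>p. (\<lambda>t. frechet_derivative (fst p) (at t) 1, \<lambda>y. frechet_derivative f (at y) v * snd p y)) xs"
    have "smooth_on T (fst p)" "smooth_on S (snd p)" if "p \<in> set xs" for p
      using xs(1) that by auto
    then show "\<forall>p\<in>set ?ys. smooth_on T (fst p) \<and> smooth_on S (snd p)"
      by (auto intro!: smooth_on_frechet_derivative
          smooth_on_bilinear[OF bounded_bilinear_mult smooth_on_frechet_derivative[OF f]])
    show "\<forall>x\<in>S. G x v = (\<Sum>p\<leftarrow>?ys. fst p (f x) * snd p x)"
      by (simp add: G_def sum_list_addf o_def)
  qed
  show "\<exists>G. (\<forall>x\<in>S. (k has_derivative G x) (at x))
      \<and> (\<forall>v. \<exists>ys::((real \<Rightarrow> real) \<times> ('a \<Rightarrow> real)) list. (\<forall>p\<in>set ys. smooth_on T (fst p) \<and> smooth_on S (snd p))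
        \<and> (\<forall>x\<in>S. G x v = (\<Sum>p\<leftarrow>ys. fst p (f x) * snd p x)))"
    by (intro exI[of _ G] conjI ballI allI deriv closed)
qed

lemma smooth_on_powr: "smooth_on {0<..} (\<lambda>t::real. t powr a)"
proof (rule smooth_on_coinduct[where P = "\<lambda>k. \<exists>c a. \<forall>t\<in>{0<..}. k t = c * t powr a"])
  show "\<exists>c b. \<forall>t\<in>{0<..}. t powr a = c * t powr b"
    by (intro exI[of _ 1] exI[of _ a]) simp
  fix k :: "real \<Rightarrow> real"
  assume "\<exists>c a. \<forall>t\<in>{0<..}. k t = c * t powr a"
  then obtain c b where k: "\<forall>t\<in>{0<..}. k t = c * t powr b" by blast
  have "(k has_derivative (\<lambda>v. c * b * t powr (b - 1) * v)) (at t)" if t: "t \<in> {0<..}" for t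
  proof -
    have "((\<lambda>t. c * t powr b) has_real_derivative c * b * t powr (b - 1)) (at t)"
      using t by (auto intro!: derivative_eq_intros)
    then have "((\<lambda>t. c * t powr b) has_derivative (\<lambda>v. c * b * t powr (b - 1) * v)) (at t)"
      by (simp add: has_field_derivative_def)
    then show ?thesis
      by (rule has_derivative_transform_within_open[OF _ _ t]) (use k in auto)
  qed
  moreover have "\<exists>c' a'. \<forall>t\<in>{0<..}. c * b * t powr (b - 1) * v = c' * t powr a'" for v
    by (intro exI[of _ "v * c * b"] exI[of _ "b - 1"]) (simp add: algebra_simps)
  ultimately show "\<exists>G. (\<forall>t\<in>{0<..}. (k has_derivative G t) (at t))
      \<and> (\<forall>v. \<exists>c a. \<forall>t\<in>{0<..}. G t v = c * t powr a)"
    by (intro exI[of _ "\<lambda>t v. c * b * t powr (b - 1) * v"]) simp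
qed simp

section \<open>The Liouville field on \<open>T\<^sup>*\<real>\<^sup>n\<close>\<close>

lemma Vhat_apply: "Vhat h x = (0, snd x + h (norm (fst x)) *\<^sub>R fst x)"
  unfolding Vhat_def by (simp add: case_prod_beta)

text \<open>\<open>\<omega>\<^sub>0\<close> is constant, and for \<open>DX (a, b) = (0, b + L a)\<close> the two remaining terms of the Lie
  derivative give \<open>\<omega>\<^sub>0(u, w)\<close> up to \<open>u\<^sub>q \<bullet> L w\<^sub>q - w\<^sub>q \<bullet> L u\<^sub>q\<close>, which vanishes for symmetric \<open>L\<close>.\<close>

lemma lie_deriv2_omega0:
  assumes X: "(X has_derivative (\<lambda>a. (0, snd a + L (fst a)))) (at x)"
    and L_sym: "\<And>a b. a \<bullet> L b = b \<bullet> L a"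
  shows "lie_deriv2 X omega0 x u w = omega0 x u w"
proof -
  have const: "(\<lambda>y. omega0 y u w) = (\<lambda>y. omega0 x u w)" by (simp add: omega0_def)
  have "frechet_derivative X (at x) = (\<lambda>a. (0, snd a + L (fst a)))"
    using frechet_derivative_at[OF X] by simp
  then show ?thesis
    unfolding lie_deriv2_def const using L_sym[of "fst u" "fst w"]
    by (simp add: omega0_def inner_add_right inner_commute algebra_simps)
qed

lemma Vhat_eq_near_zero_section:
  assumes h1: "\<forall>t. 0 < t \<and> t \<le> 1/2 \<longrightarrow> h t = 1" and "norm (fst x) < 1/2"
  shows "Vhat h x = (0, snd x + fst x)"
  using assms h1[rule_format, of "norm (fst x)"] by (cases "fst x = 0") (auto simp: Vhat_apply)

lemma smooth_on_Vhat:
  assumes hs: "smooth_on {0<..} h" and h1: "\<forall>t. 0 < t \<and> t \<le> 1/2 \<longrightarrow> h t = 1"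
  shows "smooth_on UNIV (Vhat h :: (real^'n) \<times> (real^'n) \<Rightarrow> _)"
proof (rule smooth_on_local)
  fix x :: "(real^'n) \<times> (real^'n)"
  let ?S1 = "{x::(real^'n) \<times> (real^'n). fst x \<noteq> 0}"
  let ?S2 = "{x::(real^'n) \<times> (real^'n). norm (fst x) < 1/2}"
  have S1: "open ?S1" and S2: "open ?S2"
    by (intro open_Collect_neq open_Collect_less continuous_intros)+
  have q: "smooth_on ?S1 fst" and p: "smooth_on ?S1 snd"
    by (simp_all add: S1 smooth_on_bounded_linear bounded_linear_fst bounded_linear_snd)
  have "smooth_on ?S1 (\<lambda>x. (fst x \<bullet> fst x) powr (1/2))"
    using smooth_on_bilinear[OF bounded_bilinear_inner q q] by (rule smooth_on_compose_real[OF smooth_on_powr]) simp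
  then have "smooth_on ?S1 (\<lambda>x. h ((fst x \<bullet> fst x) powr (1/2)))"
    by (rule smooth_on_compose_real[OF hs]) simp
  then have "smooth_on ?S1 (\<lambda>x. (0, snd x + h ((fst x \<bullet> fst x) powr (1/2)) *\<^sub>R fst x))"
    by (intro smooth_on_Pair smooth_on_const smooth_on_add p S1 smooth_on_bilinear[OF bounded_bilinear_scaleR _ q])
  then have s1: "smooth_on ?S1 (Vhat h)"
    by (rule smooth_on_cong) (simp add: Vhat_apply norm_eq_sqrt_inner powr_half_sqrt)
  have "smooth_on ?S2 (\<lambda>x. (0, snd x + fst x))"
    by (intro smooth_on_Pair smooth_on_const smooth_on_add smooth_on_bounded_linear S2
        bounded_linear_fst bounded_linear_snd)
  then have s2: "smooth_on ?S2 (Vhat h)"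
    by (rule smooth_on_cong) (simp add: Vhat_eq_near_zero_section[OF h1])
  show "\<exists>U. x \<in> U \<and> smooth_on U (Vhat h)"
  proof (cases "fst x = 0")
    case True
    with s2 show ?thesis by (intro exI[of _ ?S2]) simp
  next
    case False
    with s1 show ?thesis by (intro exI[of _ ?S1]) simp
  qed
qed simp

lemma Vhat_has_derivative_symmetric:
  fixes x :: "(real^'n) \<times> (real^'n)"
  assumes hs: "smooth_on {0<..} h" and h1: "\<forall>t. 0 < t \<and> t \<le> 1/2 \<longrightarrow> h t = 1"
  obtains L where "(Vhat h has_derivative (\<lambda>a. (0, snd a + L (fst a)))) (at x)"
    and "\<And>a b. a \<bullet> L b = b \<bullet> L a"
proof (cases "fst x = 0")
  case True
  have "((\<lambda>y. (0::real^'n, snd y + fst y)) has_derivative (\<lambda>a. (0, snd a + fst a))) (at x)"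
    by (auto intro!: derivative_eq_intros)
  then have "(Vhat h has_derivative (\<lambda>a. (0, snd a + fst a))) (at x)"
    by (rule has_derivative_transform_within_open[where s = "{x. norm (fst x) < 1/2}"])
      (use True in \<open>auto intro!: open_Collect_less continuous_intros simp: Vhat_eq_near_zero_section[OF h1]\<close>)
  then show ?thesis by (rule that) (simp add: inner_commute)
next
  case False
  then obtain H where hd: "(h has_real_derivative H) (at (norm (fst x)))"
    using smooth_on_differentiable_at[OF hs] real_differentiable_def by force
  have "((\<lambda>y. norm (fst y)) has_derivative (\<lambda>a. fst a \<bullet> sgn (fst x))) (at x)"
    using diff_chain_at[OF has_derivative_fst[OF has_derivative_ident] has_derivative_norm[OF False]]
    by (simp add: o_def)
  from diff_chain_at[OF this hd[unfolded has_field_derivative_def]]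
  have hn: "((\<lambda>y. h (norm (fst y))) has_derivative (\<lambda>a. H * (fst a \<bullet> sgn (fst x)))) (at x)"
    by (simp add: o_def)
  define L where "L b = h (norm (fst x)) *\<^sub>R b + (H * (b \<bullet> sgn (fst x))) *\<^sub>R fst x" for b
  have "(Vhat h has_derivative (\<lambda>a. (0, snd a + L (fst a)))) (at x)"
    unfolding Vhat_apply[abs_def] L_def
    by (rule has_derivative_Pair[OF has_derivative_const has_derivative_add[OF has_derivative_snd[OF has_derivative_ident]
          has_derivative_scaleR[OF hn has_derivative_fst[OF has_derivative_ident]]], THEN has_derivative_eq_rhs])
      (auto simp: fun_eq_iff)
  moreover have "a \<bullet> L b = b \<bullet> L a" for a b
    unfolding L_def by (simp add: inner_add_right sgn_div_norm inner_commute algebra_simps)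
  ultimately show ?thesis by (rule that)
qed

lemma liouville_on_Vhat:
  assumes "smooth_on {0<..} h" and "\<forall>t. 0 < t \<and> t \<le> 1/2 \<longrightarrow> h t = 1"
  shows "liouville_on UNIV omega0 (Vhat h :: (real^'n) \<times> (real^'n) \<Rightarrow> (real^'n) \<times> (real^'n))"
  unfolding liouville_on_def
proof (intro conjI ballI allI smooth_on_Vhat[OF assms])
  fix x :: "(real^'n) \<times> (real^'n)" and u w
  obtain L where "(Vhat h has_derivative (\<lambda>a. (0, snd a + L (fst a)))) (at x)"
    and "\<And>a b. a \<bullet> L b = b \<bullet> L a"
    using Vhat_has_derivative_symmetric[OF assms] by blast
  then show "lie_deriv2 (Vhat h) omega0 x u w = omega0 x u w" by (rule lie_deriv2_omega0)
qed

section \<open>The \<open>b\<^sup>3\<close>-Liouville field\<close>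

text \<open>The \<open>\<partial>\<^sub>P\<^sub>r\<close>-coefficient \<open>|q| h(|q|)\<close> of \<open>f\<^sup>*V\<^sub>h\<^sub>a\<^sub>t\<close>, written in terms of \<open>|q| = 2/z\<^sup>2\<close>.
  Since \<open>h t = 1/t\<close> for \<open>t \<ge> 1\<close>, it is identically \<open>1\<close> near \<open>z = 0\<close>.\<close>

definition Vb_coeff :: "(real \<Rightarrow> real) \<Rightarrow> real \<Rightarrow> real" where
  "Vb_coeff h z = (if z = 0 then 1 else 2 / z^2 * h (2 / z^2))"

definition Vb :: "(real \<Rightarrow> real) \<Rightarrow> 'n::finite wt \<Rightarrow> 'n wt" where
  "Vb h = (\<lambda>(z, P, \<psi>, \<zeta>). (0, P + Vb_coeff h z, 0, \<zeta>))"

lemma Vb_apply: "Vb h w = (0, fst (snd w) + Vb_coeff h (fst w), 0, snd (snd (snd w)))"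
  unfolding Vb_def by (simp add: case_prod_beta)

lemma Vb_coeff_eq_1:
  assumes h2: "\<forall>t\<ge>1. h t = 1 / t" and z: "\<bar>z\<bar> \<le> 1"
  shows "Vb_coeff h z = 1"
proof (cases "z = 0")
  case False
  then have "0 < z^2" "z^2 \<le> 1" using z by (simp_all add: abs_square_le_1)
  then have "2 / z^2 \<ge> 1" by (simp add: field_simps)
  then show ?thesis using h2 False by (simp add: Vb_coeff_def)
qed (simp add: Vb_coeff_def)

lemma smooth_on_Vb_coeff:
  assumes hs: "smooth_on {0<..} h" and h2: "\<forall>t\<ge>1. h t = 1 / t"
  shows "smooth_on UNIV (Vb_coeff h)"
proof (rule smooth_on_local)
  fix z :: real
  let ?S1 = "{z::real. z \<noteq> 0}"
  let ?S2 = "{z::real. \<bar>z\<bar> < 1}"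
  have S1: "open ?S1" and S2: "open ?S2"
    by (intro open_Collect_neq open_Collect_less continuous_intros)+
  have r: "smooth_on ?S1 (\<lambda>z. 2 * (z * z) powr -1)"
  proof (intro smooth_on_bilinear[OF bounded_bilinear_mult] smooth_on_const S1)
    have "smooth_on ?S1 (\<lambda>z. z * z)"
      by (intro smooth_on_bilinear[OF bounded_bilinear_mult] smooth_on_bounded_linear S1 bounded_linear_ident)
    then show "smooth_on ?S1 (\<lambda>z. (z * z) powr -1)"
      by (rule smooth_on_compose_real[OF smooth_on_powr]) (simp, metis not_real_square_gt_zero)
  qed
  have "smooth_on ?S1 (\<lambda>z. h (2 * (z * z) powr -1))"
    by (rule smooth_on_compose_real[OF hs r]) (simp, metis not_real_square_gt_zero)
  with r have "smooth_on ?S1 (\<lambda>z. (2 * (z * z) powr -1) * h (2 * (z * z) powr -1))"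
    by (rule smooth_on_bilinear[OF bounded_bilinear_mult])
  then have s1: "smooth_on ?S1 (Vb_coeff h)"
    by (rule smooth_on_cong) (simp add: Vb_coeff_def power2_eq_square powr_minus_divide)
  have s2: "smooth_on ?S2 (Vb_coeff h)"
    by (rule smooth_on_cong[OF smooth_on_const[OF S2, of 1]]) (simp add: Vb_coeff_eq_1[OF h2])
  show "\<exists>U. z \<in> U \<and> smooth_on U (Vb_coeff h)"
  proof (cases "z = 0")
    case True
    with s2 show ?thesis by (intro exI[of _ ?S2]) simp
  next
    case False
    with s1 show ?thesis by (intro exI[of _ ?S1]) simp
  qed
qed simp

lemma smooth_on_Vb:
  assumes "smooth_on {0<..} h" and "\<forall>t\<ge>1. h t = 1 / t"
  shows "smooth_on UNIV (Vb h :: 'n::finite wt \<Rightarrow> _)"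
proof -
  have lin: "smooth_on UNIV (\<lambda>w::'n wt. fst (snd w))" "smooth_on UNIV (\<lambda>w::'n wt. snd (snd (snd w)))"
    by (simp_all add: smooth_on_bounded_linear bounded_linear_compose[OF bounded_linear_fst bounded_linear_snd]
        bounded_linear_compose[OF bounded_linear_snd bounded_linear_compose[OF bounded_linear_snd bounded_linear_snd]])
  have "smooth_on UNIV (\<lambda>w::'n wt. Vb_coeff h (fst w))"
    by (rule smooth_on_compose_real[OF smooth_on_Vb_coeff[OF assms]])
      (simp_all add: smooth_on_bounded_linear bounded_linear_fst)
  then show ?thesis
    unfolding Vb_apply[abs_def] by (intro smooth_on_Pair smooth_on_add smooth_on_const lin) simp_all
qed

lemma Vb_has_derivative:
  assumes "smooth_on {0<..} h" and "\<forall>t\<ge>1. h t = 1 / t"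
  obtains K where "(Vb h has_derivative (\<lambda>d. (0, fst (snd d) + K * fst d, 0, snd (snd (snd d))))) (at x)"
proof -
  obtain K where K: "(Vb_coeff h has_real_derivative K) (at (fst x))"
    using smooth_on_differentiable_at[OF smooth_on_Vb_coeff[OF assms]] real_differentiable_def by blast
  have k: "((\<lambda>y. Vb_coeff h (fst y)) has_derivative (\<lambda>d. K * fst d)) (at x)"
    using diff_chain_at[OF has_derivative_fst[OF has_derivative_ident] K[unfolded has_field_derivative_def]]
    by (simp add: o_def)
  have "(Vb h has_derivative (\<lambda>d. (0, fst (snd d) + K * fst d, 0, snd (snd (snd d))))) (at x)"
    unfolding Vb_apply[abs_def]
    by (rule has_derivative_Pair[OF has_derivative_const has_derivative_Pair[OF has_derivative_add[OF _ k]
          has_derivative_Pair[OF has_derivative_const]]]) (auto intro!: derivative_eq_intros)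
  then show ?thesis by (rule that)
qed

lemma omega_b_apply:
  "omega_b y u w = -4 / (fst y)^3 * (fst u * fst (snd w) - fst w * fst (snd u))
    + (fst (snd (snd u)) \<bullet> snd (snd (snd w)) - fst (snd (snd w)) \<bullet> snd (snd (snd u)))"
  unfolding omega_b_def by (simp add: case_prod_beta)

text \<open>\<open>\<omega>\<^sub>b\<close> depends on the point only through \<open>z\<close>, which \<open>V\<^sub>b\<close> does not move; and the \<open>K dz\<close> term of
  \<open>dV\<^sub>b\<close> drops out of \<open>dz \<and> dP\<^sub>r\<close>.\<close>

lemma lie_deriv2_Vb_omega_b:
  assumes "smooth_on {0<..} h" and "\<forall>t\<ge>1. h t = 1 / t" and z: "fst x \<noteq> 0"
  shows "lie_deriv2 (Vb h) omega_b x u w = omega_b x u w"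
proof -
  obtain K where K: "(Vb h has_derivative (\<lambda>d. (0, fst (snd d) + K * fst d, 0, snd (snd (snd d))))) (at x)"
    using Vb_has_derivative[OF assms(1,2)] by blast
  define A where "A = fst u * fst (snd w) - fst w * fst (snd u)"
  define B where "B = fst (snd (snd u)) \<bullet> snd (snd (snd w)) - fst (snd (snd w)) \<bullet> snd (snd (snd u))"
  have "\<exists>D. ((\<lambda>t::real. -4 / t^3 * A + B) has_real_derivative D) (at (fst x))"
    by (intro exI derivative_eq_intros refl) (use z in auto)
  then obtain D where D: "((\<lambda>t::real. -4 / t^3 * A + B) has_real_derivative D) (at (fst x))" ..
  have "((\<lambda>y. omega_b y u w) has_derivative (\<lambda>d. D * fst d)) (at x)"
    using diff_chain_at[OF has_derivative_fst[OF has_derivative_ident] D[unfolded has_field_derivative_def]]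
    by (simp add: o_def omega_b_apply A_def B_def)
  then have "frechet_derivative (\<lambda>y. omega_b y u w) (at x) (Vb h x) = 0"
    by (simp add: frechet_derivative_at[symmetric] Vb_apply)
  then show ?thesis
    unfolding lie_deriv2_def frechet_derivative_at[OF K, symmetric] omega_b_apply
    by (simp add: algebra_simps)
qed

lemma mem_Wtilde:
  "w \<in> Wtilde \<longleftrightarrow> norm (fst (snd (snd w))) = 1 \<and> fst (snd (snd w)) \<bullet> snd (snd (snd w)) = 0"
  unfolding Wtilde_def by (simp add: case_prod_beta)

lemma mem_Ytilde: "w \<in> Ytilde \<longleftrightarrow> w \<in> Wtilde \<and> fst w = 0"
  unfolding Ytilde_def by simp

lemma tangent_vector_level_set:
  assumes v: "v \<in> tangent_vectors N x" and F: "\<And>y. y \<in> N \<Longrightarrow> F y = c"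
    and F': "(F has_derivative F') (at x)"
  shows "F' v = 0"
proof -
  obtain \<gamma> e where \<gamma>: "0 < e" "\<gamma> 0 = x" "\<And>t. \<bar>t\<bar> < e \<Longrightarrow> \<gamma> t \<in> N"
      "(\<gamma> has_vector_derivative v) (at 0)"
    using v unfolding tangent_vectors_def by blast
  have "((\<lambda>t. F (\<gamma> t)) has_derivative (\<lambda>s. F' (s *\<^sub>R v))) (at 0)"
    using diff_chain_at[OF \<gamma>(4)[unfolded has_vector_derivative_def] F'[folded \<gamma>(2)]]
    by (simp add: o_def)
  moreover have "((\<lambda>t. F (\<gamma> t)) has_derivative (\<lambda>s. 0)) (at 0)"
    by (rule has_derivative_transform_within_open[OF has_derivative_const[of c] open_ball[of 0 e]])
      (use \<gamma> F in \<open>auto simp: dist_real_def\<close>)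
  ultimately have "(\<lambda>s. F' (s *\<^sub>R v)) = (\<lambda>s. 0)"
    using has_derivative_unique by blast
  then show ?thesis by (metis scaleR_one)
qed

lemma tangent_vectors_Wtilde:
  fixes w v :: "'n::finite wt"
  assumes "v \<in> tangent_vectors Wtilde w"
  shows "fst (snd (snd w)) \<bullet> fst (snd (snd v)) = 0"
    and "fst (snd (snd w)) \<bullet> snd (snd (snd v)) + fst (snd (snd v)) \<bullet> snd (snd (snd w)) = 0"
proof -
  have "((\<lambda>y::'n wt. fst (snd (snd y)) \<bullet> fst (snd (snd y))) has_derivative
      (\<lambda>d. fst (snd (snd d)) \<bullet> fst (snd (snd w)) + fst (snd (snd w)) \<bullet> fst (snd (snd d)))) (at w)"
    by (auto intro!: derivative_eq_intros)
  from tangent_vector_level_set[OF assms _ this, of 1]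
  show "fst (snd (snd w)) \<bullet> fst (snd (snd v)) = 0"
    by (simp add: mem_Wtilde norm_eq_1 inner_commute)
  have "((\<lambda>y::'n wt. fst (snd (snd y)) \<bullet> snd (snd (snd y))) has_derivative
      (\<lambda>d. fst (snd (snd d)) \<bullet> snd (snd (snd w)) + fst (snd (snd w)) \<bullet> snd (snd (snd d)))) (at w)"
    by (auto intro!: derivative_eq_intros)
  from tangent_vector_level_set[OF assms _ this, of 0]
  show "fst (snd (snd w)) \<bullet> snd (snd (snd v)) + fst (snd (snd v)) \<bullet> snd (snd (snd w)) = 0"
    by (simp add: mem_Wtilde add.commute)
qed

text \<open>\<open>V\<^sub>b(w) = (0, c, 0, \<zeta>)\<close> is the velocity of the curve \<open>t \<mapsto> (z, P\<^sub>r + t c, \<psi>, (1 + t) \<zeta>)\<close>, which stays in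
  \<open>W\<^sub>t\<^sub>i\<^sub>l\<^sub>d\<^sub>e\<close> and keeps \<open>z\<close> fixed.\<close>

lemma Vb_in_tangent_vectors:
  fixes w :: "'n::finite wt"
  assumes "w \<in> Wtilde"
  shows "Vb h w \<in> tangent_vectors Wtilde w" and "w \<notin> Ytilde \<Longrightarrow> Vb h w \<in> tangent_vectors (Wtilde - Ytilde) w"
proof -
  let ?c = "fst (snd w) + Vb_coeff h (fst w)"
  let ?\<gamma> = "\<lambda>t. (fst w, fst (snd w) + t * ?c, fst (snd (snd w)), (1 + t) *\<^sub>R snd (snd (snd w)))"
  have vel: "(?\<gamma> has_vector_derivative Vb h w) (at 0)"
    unfolding Vb_apply by (auto intro!: derivative_eq_intros)
  have "?\<gamma> t \<in> Wtilde" for t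
    using assms by (simp add: mem_Wtilde)
  then have "Vb h w \<in> tangent_vectors N w" if "\<And>t. ?\<gamma> t \<in> Wtilde \<Longrightarrow> ?\<gamma> t \<in> N" for N
    unfolding tangent_vectors_def mem_Collect_eq
    by (intro exI[of _ ?\<gamma>] exI[of _ "1::real"]) (use vel that in simp)
  then show "Vb h w \<in> tangent_vectors Wtilde w" and "w \<notin> Ytilde \<Longrightarrow> Vb h w \<in> tangent_vectors (Wtilde - Ytilde) w"
    using assms by (auto simp: mem_Ytilde)
qed

lemma fmap_apply:
  "fmap w = ((2 / (fst w)^2) *\<^sub>R fst (snd (snd w)),
     fst (snd w) *\<^sub>R fst (snd (snd w)) + ((fst w)^2 / 2) *\<^sub>R snd (snd (snd w)))"
  unfolding fmap_def by (simp add: case_prod_beta)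

lemma frechet_derivative_fmap:
  fixes w :: "'n::finite wt"
  assumes z: "fst w \<noteq> 0"
  shows "frechet_derivative fmap (at w) d =
    ((-4 / (fst w)^3 * fst d) *\<^sub>R fst (snd (snd w)) + (2 / (fst w)^2) *\<^sub>R fst (snd (snd d)),
     fst (snd d) *\<^sub>R fst (snd (snd w)) + fst (snd w) *\<^sub>R fst (snd (snd d))
       + (fst w * fst d) *\<^sub>R snd (snd (snd w)) + ((fst w)^2 / 2) *\<^sub>R snd (snd (snd d)))"
proof -
  have "((\<lambda>t::real. 2 / t^2) has_real_derivative (-4 / (fst w)^3)) (at (fst w))"
    using z by (auto intro!: derivative_eq_intros simp: field_simps power2_eq_square power3_eq_cube)
  from diff_chain_at[OF has_derivative_fst[OF has_derivative_ident] this[unfolded has_field_derivative_def]]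
  have a: "((\<lambda>x::'n wt. 2 / (fst x)^2) has_derivative (\<lambda>d. -4 / (fst w)^3 * fst d)) (at w)"
    by (simp add: o_def mult.commute)
  have b: "((\<lambda>x::'n wt. (fst x)^2 / 2) has_derivative (\<lambda>d. fst w * fst d)) (at w)"
    by (auto intro!: derivative_eq_intros)
  have "(fmap has_derivative (\<lambda>d.
    ((-4 / (fst w)^3 * fst d) *\<^sub>R fst (snd (snd w)) + (2 / (fst w)^2) *\<^sub>R fst (snd (snd d)),
     fst (snd d) *\<^sub>R fst (snd (snd w)) + fst (snd w) *\<^sub>R fst (snd (snd d))
       + (fst w * fst d) *\<^sub>R snd (snd (snd w)) + ((fst w)^2 / 2) *\<^sub>R snd (snd (snd d))))) (at w)"
    unfolding fmap_apply[abs_def]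
    by (rule has_derivative_Pair[OF has_derivative_scaleR[OF a]
          has_derivative_add[OF has_derivative_scaleR has_derivative_scaleR[OF b]], THEN has_derivative_eq_rhs])
      (auto intro!: derivative_eq_intros simp: fun_eq_iff algebra_simps)
  then show ?thesis by (simp add: frechet_derivative_at[symmetric])
qed

lemma Vhat_fmap:
  fixes w :: "'n::finite wt"
  assumes w: "w \<in> Wtilde" and z: "fst w \<noteq> 0"
  shows "Vhat h (fmap w) = (0, fst (snd w) *\<^sub>R fst (snd (snd w)) + ((fst w)^2 / 2) *\<^sub>R snd (snd (snd w))
    + Vb_coeff h (fst w) *\<^sub>R fst (snd (snd w)))"
proof -
  have "norm ((2 / (fst w)^2) *\<^sub>R fst (snd (snd w))) = 2 / (fst w)^2"
    using w z by (simp add: mem_Wtilde)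
  then show ?thesis using z by (simp add: Vhat_apply fmap_apply Vb_coeff_def algebra_simps)
qed

lemma f_related_Vb: "f_related h (Vb h :: 'n::finite wt \<Rightarrow> _)"
  unfolding f_related_def
proof
  fix w :: "'n wt" assume "w \<in> Wtilde - Ytilde"
  then have z: "fst w \<noteq> 0" and w: "w \<in> Wtilde" by (auto simp: mem_Ytilde)
  show "frechet_derivative fmap (at w) (Vb h w) = Vhat h (fmap w)"
    unfolding frechet_derivative_fmap[OF z] Vhat_fmap[OF w z] by (simp add: Vb_apply algebra_simps)
qed

text \<open>Away from \<open>z = 0\<close> the tangent map of \<open>fmap\<close> is injective on \<open>T W\<^sub>t\<^sub>i\<^sub>l\<^sub>d\<^sub>e\<close>: pairing its two
  components with \<open>\<psi>\<close> recovers \<open>dz\<close> and \<open>dP\<^sub>r\<close>, and then \<open>d\<psi>\<close> and \<open>d\<zeta>\<close>.\<close>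

lemma tangent_vector_eq_Vb:
  fixes w :: "'n::finite wt"
  assumes w: "w \<in> Wtilde" and z: "fst w \<noteq> 0" and v: "v \<in> tangent_vectors Wtilde w"
    and eq: "frechet_derivative fmap (at w) v = Vhat h (fmap w)"
  shows "v = Vb h w"
proof -
  obtain a b u u' where v_eq: "v = (a, b, u, u')" by (metis prod.collapse)
  obtain Z P \<psi> \<zeta> where w_eq: "w = (Z, P, \<psi>, \<zeta>)" by (metis prod.collapse)
  have c: "\<psi> \<bullet> u = 0" "\<psi> \<bullet> u' + u \<bullet> \<zeta> = 0"
    using tangent_vectors_Wtilde[OF v] by (simp_all add: v_eq w_eq)
  have ww: "\<psi> \<bullet> \<psi> = 1" "\<psi> \<bullet> \<zeta> = 0" using w by (simp_all add: mem_Wtilde w_eq norm_eq_1)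
  have z0: "Z \<noteq> 0" using z w_eq by simp
  define k where "k = Vb_coeff h Z"
  have E: "(-4 / Z^3 * a) *\<^sub>R \<psi> + (2 / Z^2) *\<^sub>R u = 0"
      "b *\<^sub>R \<psi> + P *\<^sub>R u + (Z * a) *\<^sub>R \<zeta> + (Z^2 / 2) *\<^sub>R u' = P *\<^sub>R \<psi> + (Z^2 / 2) *\<^sub>R \<zeta> + k *\<^sub>R \<psi>"
    using eq unfolding frechet_derivative_fmap[OF z] Vhat_fmap[OF w z] by (simp_all add: v_eq w_eq k_def)
  have "\<psi> \<bullet> ((-4 / Z^3 * a) *\<^sub>R \<psi> + (2 / Z^2) *\<^sub>R u) = 0" using E(1) by simp
  then have "a = 0" using c ww z0 by (simp add: inner_add_right inner_diff_right)
  moreover from this have "u = 0" using E(1) z0 by simp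
  moreover have E2: "b *\<^sub>R \<psi> + (Z^2 / 2) *\<^sub>R u' = (P + k) *\<^sub>R \<psi> + (Z^2 / 2) *\<^sub>R \<zeta>"
    using E(2) \<open>a = 0\<close> \<open>u = 0\<close> by (simp add: algebra_simps)
  moreover have "b = P + k"
    using arg_cong[OF E2, of "inner \<psi>"] c ww \<open>u = 0\<close> by (simp add: inner_add_right)
  moreover from this E2 z0 have "u' = \<zeta>" by simp
  ultimately show ?thesis by (simp add: v_eq w_eq Vb_apply k_def)
qed

lemma b3_vector_field_Vb:
  assumes "smooth_on {0<..} h" and "\<forall>t\<ge>1. h t = 1 / t"
  shows "b3_vector_field (Vb h :: 'n::finite wt \<Rightarrow> _)"
  unfolding b3_vector_field_def
proof (intro conjI ballI exI[of _ "\<lambda>_. 0"])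
  show "smooth_on_set Wtilde (Vb h :: 'n wt \<Rightarrow> _)"
    by (rule smooth_on_imp_smooth_on_set[OF smooth_on_Vb[OF assms]])
  show "smooth_on_set Wtilde (\<lambda>_::'n wt. 0::real)"
    by (rule smooth_on_imp_smooth_on_set[OF smooth_on_const]) simp
  show "Vb h w \<in> tangent_vectors Wtilde w" if "w \<in> Wtilde" for w :: "'n wt"
    using Vb_in_tangent_vectors(1)[OF that] .
  show "fst (Vb h w) = (fst w)^3 * 0" for w :: "'n wt"
    by (simp add: Vb_apply)
qed

lemma liouville_on_subset_Vb:
  assumes "smooth_on {0<..} h" and "\<forall>t\<ge>1. h t = 1 / t"
  shows "liouville_on_subset (Wtilde - Ytilde) omega_b (Vb h :: 'n::finite wt \<Rightarrow> _)"
  unfolding liouville_on_subset_def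
proof (intro conjI ballI)
  show "smooth_on_set (Wtilde - Ytilde) (Vb h :: 'n wt \<Rightarrow> _)"
    by (rule smooth_on_imp_smooth_on_set[OF smooth_on_Vb[OF assms]])
  fix x :: "'n wt" assume x: "x \<in> Wtilde - Ytilde"
  then show "Vb h x \<in> tangent_vectors (Wtilde - Ytilde) x"
    by (simp add: Vb_in_tangent_vectors)
  have z: "fst x \<noteq> 0" using x by (simp add: mem_Ytilde)
  show "\<exists>U g. x \<in> U \<and> smooth_on U g \<and> (\<forall>y\<in>U \<inter> (Wtilde - Ytilde). g y = Vb h y)
      \<and> (\<forall>u\<in>tangent_vectors (Wtilde - Ytilde) x. \<forall>w\<in>tangent_vectors (Wtilde - Ytilde) x.
            lie_deriv2 g omega_b x u w = omega_b x u w)"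
    by (intro exI[of _ UNIV] exI[of _ "Vb h"] conjI ballI)
      (simp_all add: smooth_on_Vb[OF assms] lie_deriv2_Vb_omega_b[OF assms z])
qed

text \<open>On \<open>z = 0\<close> uniqueness follows by continuity, approaching along \<open>z = 1 / (m + 1)\<close>, where
  \<open>V\<^sub>b\<close> is constant.\<close>

lemma b3_f_related_eq_Vb:
  fixes V :: "'n::finite wt \<Rightarrow> 'n wt"
  assumes h2: "\<forall>t\<ge>1. h t = 1 / t" and V: "b3_vector_field V" "f_related h V" and w: "w \<in> Wtilde"
  shows "V w = Vb h w"
proof -
  have off: "V y = Vb h y" if "y \<in> Wtilde" "fst y \<noteq> 0" for y
    using that V by (intro tangent_vector_eq_Vb) (auto simp: b3_vector_field_def f_related_def mem_Ytilde)
  show ?thesis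
  proof (cases "fst w = 0")
    case True
    define s where "s m = (inverse (real (Suc m)), snd w)" for m
    have sW: "s m \<in> Wtilde" for m using w by (simp add: s_def mem_Wtilde)
    have "s \<longlonglongrightarrow> (0, snd w)"
      unfolding s_def by (intro tendsto_intros LIMSEQ_inverse_real_of_nat)
    then have s_lim: "s \<longlonglongrightarrow> w" using True by (metis prod.collapse)
    have "continuous_on Wtilde V"
      using V(1) smooth_on_set_continuous_on by (auto simp: b3_vector_field_def)
    then have "(\<lambda>m. V (s m)) \<longlonglongrightarrow> V w"
      using continuous_on_tendsto_compose[OF _ s_lim w] sW by simp
    moreover have "V (s m) = Vb h w" for m
    proof -
      have "\<bar>fst (s m)\<bar> \<le> 1" by (simp add: s_def field_simps)
      then show ?thesis
        using off[OF sW] True Vb_coeff_eq_1[OF h2, of "fst (s m)"] Vb_coeff_eq_1[OF h2, of 0]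
        by (simp add: s_def Vb_apply)
    qed
    ultimately have "(\<lambda>m. Vb h w) \<longlonglongrightarrow> V w" by simp
    then show ?thesis by (simp add: LIMSEQ_const_iff)
  qed (use off w in blast)
qed

theorem lemma5p6:
  fixes h :: "real \<Rightarrow> real"
  assumes "smooth_on {0<..} h"
    and "\<forall>t>0. 0 < h t \<and> h t \<le> 2"
    and "\<forall>t. 0 < t \<and> t \<le> 1/2 \<longrightarrow> h t = 1"
    and "\<forall>t\<ge>1. h t = 1 / t"
  shows "liouville_on UNIV omega0 (Vhat h :: (real^'n) \<times> (real^'n) \<Rightarrow> (real^'n) \<times> (real^'n))
    \<and> (\<exists>V :: 'n wt \<Rightarrow> 'n wt.
          b3_vector_field V \<and> f_related h V
          \<and> liouville_on_subset (Wtilde - Ytilde) omega_b V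
          \<and> (\<forall>V'. b3_vector_field V' \<and> f_related h V' \<longrightarrow> (\<forall>w\<in>Wtilde. V' w = V w)))"
  using liouville_on_Vhat[OF assms(1,3)] b3_vector_field_Vb[OF assms(1,4)] f_related_Vb
    liouville_on_subset_Vb[OF assms(1,4)] b3_f_related_eq_Vb[OF assms(4)]
  by blast

end
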